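(* The classes of weakly Hausdorff spaces, of weakly Hausdorff compact spaces, of weakly Hausdorff sober spaces, and of weakly Hausdorff compact sober spaces are not $\omega$-projective. Moreover, there is an ep-system $(p_{mn}\colon X_n\to X_m)_{m\le n\in\mathbb N}$ of weakly Hausdorff compact sober spaces whose projective limit in the category of topological spaces is not weakly Hausdorff.
   Context: A projective system of topological spaces consists of a directed preordered set $(I,\sqsubseteq)$, spaces $X_i$ and continuous maps $p_{ij}\colon X_j\to X_i$ for $i\sqsubseteq j$ with $p_{ii}=\mathrm{id}$ and $p_{ij}\circ p_{jk}=p_{ik}$; its projective limit is its limit in the category of topological spaces. A class is $\omega$-projective if it is closed under projective limits of systems whose index set has a countable cofinal subset. The specialization preorder is $x\le y$ iff every open neighbourhood of $x$ contains $y$; $\uparrow x$ is the set of points above $x$. A space is weakly Hausdorff if for any two points $x,y$ and every open neighbourhood $W$ of $\uparrow x\cap\uparrow y$ there are open neighbourhoods $U$ of $x$ and $V$ of $y$ with $U\cap V\subseteq W$. Sober: $T_0$ and every irreducible closed set is the closure of a point. A continuous map $p\colon Y\to X$ is a projection if there is a continuous $e\colon X\to Y$ with $p\circ e=\mathrm{id}_X$ and $e\circ p\le\mathrm{id}_Y$ pointwise in the specialization preorder of $Y$; an ep-system is a projective system whose bonding maps $p_{ij}$ are projections. *)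

theory Defs
  imports "HOL-Analysis.Analysis"
begin

definition spec_le :: "'a topology \<Rightarrow> 'a \<Rightarrow> 'a \<Rightarrow> bool" where
  "spec_le X x y \<longleftrightarrow> x \<in> topspace X \<and> y \<in> topspace X \<and>
     (\<forall>U. openin X U \<and> x \<in> U \<longrightarrow> y \<in> U)"

definition upset :: "'a topology \<Rightarrow> 'a \<Rightarrow> 'a set" where
  "upset X x = {y \<in> topspace X. spec_le X x y}"

definition weakly_hausdorff :: "'a topology \<Rightarrow> bool" where
  "weakly_hausdorff X \<longleftrightarrow>
     (\<forall>x\<in>topspace X. \<forall>y\<in>topspace X. \<forall>W. openin X W \<and> upset X x \<inter> upset X y \<subseteq> W \<longrightarrow>
        (\<exists>U V. openin X U \<and> openin X V \<and> x \<in> U \<and> y \<in> V \<and> U \<inter> V \<subseteq> W))"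

definition irreducible_closed :: "'a topology \<Rightarrow> 'a set \<Rightarrow> bool" where
  "irreducible_closed X C \<longleftrightarrow> closedin X C \<and> C \<noteq> {} \<and>
     (\<forall>A B. closedin X A \<and> closedin X B \<and> C \<subseteq> A \<union> B \<longrightarrow> C \<subseteq> A \<or> C \<subseteq> B)"

definition sober :: "'a topology \<Rightarrow> bool" where
  "sober X \<longleftrightarrow> t0_space X \<and>
     (\<forall>C. irreducible_closed X C \<longrightarrow> (\<exists>x\<in>topspace X. C = X closure_of {x}))"

definition proj_system ::
  "'i set \<Rightarrow> ('i \<Rightarrow> 'i \<Rightarrow> bool) \<Rightarrow> ('i \<Rightarrow> 'a topology) \<Rightarrow> ('i \<Rightarrow> 'i \<Rightarrow> 'a \<Rightarrow> 'a) \<Rightarrow> bool" where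
  "proj_system I le X p \<longleftrightarrow>
     (\<forall>i\<in>I. le i i) \<and>
     (\<forall>i\<in>I. \<forall>j\<in>I. \<forall>k\<in>I. le i j \<and> le j k \<longrightarrow> le i k) \<and>
     I \<noteq> {} \<and> (\<forall>i\<in>I. \<forall>j\<in>I. \<exists>k\<in>I. le i k \<and> le j k) \<and>
     (\<forall>i\<in>I. \<forall>j\<in>I. le i j \<longrightarrow> continuous_map (X j) (X i) (p i j)) \<and>
     (\<forall>i\<in>I. \<forall>x\<in>topspace (X i). p i i x = x) \<and>
     (\<forall>i\<in>I. \<forall>j\<in>I. \<forall>k\<in>I. le i j \<and> le j k \<longrightarrow>
        (\<forall>x\<in>topspace (X k). p i j (p j k x) = p i k x))"

definition proj_limit ::
  "'i set \<Rightarrow> ('i \<Rightarrow> 'i \<Rightarrow> bool) \<Rightarrow> ('i \<Rightarrow> 'a topology) \<Rightarrow> ('i \<Rightarrow> 'i \<Rightarrow> 'a \<Rightarrow> 'a) \<Rightarrow> ('i \<Rightarrow> 'a) topology" where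
  "proj_limit I le X p = subtopology (product_topology X I)
     {x \<in> topspace (product_topology X I). \<forall>i\<in>I. \<forall>j\<in>I. le i j \<longrightarrow> p i j (x j) = x i}"

definition is_projection :: "'a topology \<Rightarrow> 'a topology \<Rightarrow> ('a \<Rightarrow> 'a) \<Rightarrow> bool" where
  "is_projection Y X q \<longleftrightarrow> continuous_map Y X q \<and>
     (\<exists>e. continuous_map X Y e \<and> (\<forall>x\<in>topspace X. q (e x) = x) \<and>
          (\<forall>y\<in>topspace Y. spec_le Y (e (q y)) y))"

definition ep_system ::
  "'i set \<Rightarrow> ('i \<Rightarrow> 'i \<Rightarrow> bool) \<Rightarrow> ('i \<Rightarrow> 'a topology) \<Rightarrow> ('i \<Rightarrow> 'i \<Rightarrow> 'a \<Rightarrow> 'a) \<Rightarrow> bool" where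
  "ep_system I le X p \<longleftrightarrow> proj_system I le X p \<and>
     (\<forall>i\<in>I. \<forall>j\<in>I. le i j \<longrightarrow> is_projection (X j) (X i) (p i j))"

text \<open>omega-projectivity of a class (given at the carrier type by C and at the limit type by C').
  Only the canonical limit is tested; all classes considered are homeomorphism invariant.\<close>
definition omega_projective ::
  "('a topology \<Rightarrow> bool) \<Rightarrow> (('i \<Rightarrow> 'a) topology \<Rightarrow> bool) \<Rightarrow> bool" where
  "omega_projective C C' \<longleftrightarrow>
     (\<forall>(I::'i set) le X p. proj_system I le X p \<and>
        (\<exists>D\<subseteq>I. countable D \<and> (\<forall>i\<in>I. \<exists>d\<in>D. le i d)) \<and> (\<forall>i\<in>I. C (X i))
        \<longrightarrow> C' (proj_limit I le X p))"

end

theory Submission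
  imports Defs
begin

text \<open>Let \<open>S\<^sub>n\<close> be the poset made of two chains \<open>A\<^sub>0 < \<dots> < A\<^sub>n\<close> and
  \<open>B\<^sub>0 < \<dots> < B\<^sub>n\<close> together with pairwise incomparable tops \<open>C\<^sub>k\<close> (\<open>k \<in> \<nat>\<close>), where
  \<open>C\<^sub>k\<close> lies above \<open>A\<^sub>i\<close> and \<open>B\<^sub>i\<close> exactly when \<open>i \<le> k\<close>. In the Alexandrov topology
  every \<open>S\<^sub>n\<close> is weakly Hausdorff (upper sets are open), compact (everything lies above
  \<open>A\<^sub>0\<close> or \<open>B\<^sub>0\<close>) and sober (every nonempty subset has a maximal element), and cutting the
  chains at level \<open>m\<close> is a projection \<open>S\<^sub>n \<rightarrow> S\<^sub>m\<close>. In the limit the threads \<open>(A\<^sub>n)\<close>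
  and \<open>(B\<^sub>n)\<close> have no common upper bound: such a thread would be a top \<open>C\<^sub>k\<close> with
  \<open>k \<ge> n\<close> at every level \<open>n\<close>, while the bonding maps fix the tops. Yet a neighbourhood of
  a thread constrains only finitely many coordinates, so every neighbourhood of either thread
  contains the constant thread \<open>C\<^sub>N\<close> for \<open>N\<close> large.\<close>

section \<open>Alexandrov topology of a poset\<close>

definition upper_topology :: "'a::order set \<Rightarrow> 'a topology" where
  "upper_topology S = topology (\<lambda>U. U \<subseteq> S \<and> (\<forall>x\<in>U. \<forall>y\<in>S. x \<le> y \<longrightarrow> y \<in> U))"

lemma openin_upper_topology:
  "openin (upper_topology S) U \<longleftrightarrow> U \<subseteq> S \<and> (\<forall>x\<in>U. \<forall>y\<in>S. x \<le> y \<longrightarrow> y \<in> U)"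
proof -
  have "istopology (\<lambda>U. U \<subseteq> S \<and> (\<forall>x\<in>U. \<forall>y\<in>S. x \<le> y \<longrightarrow> y \<in> U))"
    unfolding istopology_def by blast
  then show ?thesis
    by (simp add: upper_topology_def)
qed

lemma openin_upper_topology_atLeast: "openin (upper_topology S) {y \<in> S. x \<le> y}"
  by (auto simp: openin_upper_topology)

lemma topspace_upper_topology [simp]: "topspace (upper_topology S) = S"
  unfolding topspace_def openin_upper_topology by blast

lemma closedin_upper_topology:
  "closedin (upper_topology S) C \<longleftrightarrow> C \<subseteq> S \<and> (\<forall>y\<in>C. \<forall>x\<in>S. x \<le> y \<longrightarrow> x \<in> C)"
  unfolding closedin_def openin_upper_topology by auto

lemma closure_of_upper_topology_singleton:
  "x \<in> S \<Longrightarrow> upper_topology S closure_of {x} = {y \<in> S. y \<le> x}"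
  by (rule closure_of_unique) (auto simp: closedin_upper_topology)

lemma spec_le_upper_topology: "spec_le (upper_topology S) x y \<longleftrightarrow> x \<in> S \<and> y \<in> S \<and> x \<le> y"
proof
  assume "spec_le (upper_topology S) x y"
  then show "x \<in> S \<and> y \<in> S \<and> x \<le> y"
    using openin_upper_topology_atLeast[of S x] unfolding spec_le_def by auto
qed (auto simp: spec_le_def openin_upper_topology)

lemma continuous_map_upper_topology:
  assumes "f ` S \<subseteq> T" and "\<And>x y. x \<in> S \<Longrightarrow> y \<in> S \<Longrightarrow> x \<le> y \<Longrightarrow> f x \<le> f y"
  shows "continuous_map (upper_topology S) (upper_topology T) f"
  using assms unfolding continuous_map_def openin_upper_topology by auto

lemma weakly_hausdorff_upper_topology: "weakly_hausdorff (upper_topology S)"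
  unfolding weakly_hausdorff_def topspace_upper_topology
proof (intro ballI allI impI)
  fix x y W
  assume "x \<in> S" "y \<in> S" "openin (upper_topology S) W \<and>
    upset (upper_topology S) x \<inter> upset (upper_topology S) y \<subseteq> W"
  then show "\<exists>U V. openin (upper_topology S) U \<and> openin (upper_topology S) V \<and>
    x \<in> U \<and> y \<in> V \<and> U \<inter> V \<subseteq> W"
    by (intro exI[of _ "{z \<in> S. x \<le> z}"] exI[of _ "{z \<in> S. y \<le> z}"])
       (auto simp: openin_upper_topology_atLeast upset_def spec_le_upper_topology)
qed

lemma t0_space_upper_topology: "t0_space (upper_topology S)"
  unfolding t0_space_def topspace_upper_topology
proof (intro ballI impI)
  fix x y assume "x \<in> S" "y \<in> S" "x \<noteq> y"
  then consider "\<not> x \<le> y" | "\<not> y \<le> x"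
    by fastforce
  then show "\<exists>U. openin (upper_topology S) U \<and> (x \<notin> U) = (y \<in> U)"
    using openin_upper_topology_atLeast[of S x] openin_upper_topology_atLeast[of S y]
      \<open>x \<in> S\<close> \<open>y \<in> S\<close> by cases blast+
qed

lemma compact_space_upper_topology:
  assumes "finite M" "M \<subseteq> S" and "\<And>y. y \<in> S \<Longrightarrow> \<exists>m\<in>M. m \<le> y"
  shows "compact_space (upper_topology S)"
  unfolding compact_space_alt topspace_upper_topology
proof (intro allI impI)
  fix \<U> assume \<U>: "(\<forall>U\<in>\<U>. openin (upper_topology S) U) \<and> S \<subseteq> \<Union>\<U>"
  then have "\<forall>m\<in>M. \<exists>U\<in>\<U>. m \<in> U"
    using assms(2) by blast
  then obtain g where g: "\<And>m. m \<in> M \<Longrightarrow> g m \<in> \<U> \<and> m \<in> g m"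
    by metis
  have "S \<subseteq> \<Union>(g ` M)"
  proof
    fix y assume "y \<in> S"
    then obtain m where "m \<in> M" "m \<le> y"
      using assms(3) by blast
    then show "y \<in> \<Union>(g ` M)"
      using g[of m] \<U> \<open>y \<in> S\<close> unfolding openin_upper_topology by blast
  qed
  then show "\<exists>\<F>. finite \<F> \<and> \<F> \<subseteq> \<U> \<and> S \<subseteq> \<Union>\<F>"
    using g assms(1) by blast
qed

text \<open>An irreducible closed set is a directed lower set, so its maximal element generates it.\<close>
lemma sober_upper_topology:
  assumes "\<And>C. C \<subseteq> S \<Longrightarrow> C \<noteq> {} \<Longrightarrow> \<exists>m\<in>C. \<forall>w\<in>C. m \<le> w \<longrightarrow> w = m"
  shows "sober (upper_topology S)"
  unfolding sober_def
proof (intro conjI t0_space_upper_topology allI impI)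
  fix C assume C: "irreducible_closed (upper_topology S) C"
  then have "C \<subseteq> S" "C \<noteq> {}" and down: "\<And>y x. y \<in> C \<Longrightarrow> x \<in> S \<Longrightarrow> x \<le> y \<Longrightarrow> x \<in> C"
    by (auto simp: irreducible_closed_def closedin_upper_topology)
  have directed: "\<exists>w\<in>C. u \<le> w \<and> v \<le> w" if "u \<in> C" "v \<in> C" for u v
  proof (rule ccontr)
    assume "\<not> ?thesis"
    then have "C \<subseteq> (S - {z \<in> S. u \<le> z}) \<union> (S - {z \<in> S. v \<le> z})"
      using \<open>C \<subseteq> S\<close> by blast
    moreover have "closedin (upper_topology S) (S - {z \<in> S. u \<le> z})"
                  "closedin (upper_topology S) (S - {z \<in> S. v \<le> z})"
      by (auto simp: closedin_upper_topology intro: order_trans)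
    ultimately have "C \<subseteq> S - {z \<in> S. u \<le> z} \<or> C \<subseteq> S - {z \<in> S. v \<le> z}"
      using C unfolding irreducible_closed_def by blast
    then show False
      using that \<open>C \<subseteq> S\<close> by blast
  qed
  obtain m where m: "m \<in> C" "\<And>w. w \<in> C \<Longrightarrow> m \<le> w \<Longrightarrow> w = m"
    using assms[OF \<open>C \<subseteq> S\<close> \<open>C \<noteq> {}\<close>] by blast
  have "u \<le> m" if "u \<in> C" for u
    using directed[OF that m(1)] m(2) by metis
  then have "C = {y \<in> S. y \<le> m}"
    using down m(1) \<open>C \<subseteq> S\<close> by blast
  then show "\<exists>x\<in>topspace (upper_topology S). C = upper_topology S closure_of {x}"
    using m(1) \<open>C \<subseteq> S\<close> closure_of_upper_topology_singleton[of m S] by auto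
qed

section \<open>Specialization order and projective limits\<close>

lemma spec_le_continuous_map:
  assumes f: "continuous_map X Y f" and "spec_le X x z"
  shows "spec_le Y (f x) (f z)"
proof -
  have "f z \<in> V" if "openin Y V" "f x \<in> V" for V
  proof -
    have "openin X {a \<in> topspace X. f a \<in> V}"
      using openin_continuous_map_preimage[OF f that(1)] .
    then show ?thesis
      using \<open>spec_le X x z\<close> that(2) unfolding spec_le_def by auto
  qed
  moreover have "f x \<in> topspace Y" "f z \<in> topspace Y"
    using \<open>spec_le X x z\<close> continuous_map_image_subset_topspace[OF f] by (auto simp: spec_le_def)
  ultimately show ?thesis
    unfolding spec_le_def by blast
qed

lemma weakly_hausdorff_disjoint_upsetsE:
  assumes "weakly_hausdorff X" "x \<in> topspace X" "y \<in> topspace X"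
    and "upset X x \<inter> upset X y = {}"
  obtains U V where "openin X U" "openin X V" "x \<in> U" "y \<in> V" "U \<inter> V = {}"
  using assms unfolding weakly_hausdorff_def by (metis openin_empty subset_empty)

lemma topspace_proj_limit:
  "topspace (proj_limit I le X p) =
     {x \<in> topspace (product_topology X I). \<forall>i\<in>I. \<forall>j\<in>I. le i j \<longrightarrow> p i j (x j) = x i}"
  unfolding proj_limit_def by auto

lemma continuous_map_proj_limit_component:
  "i \<in> I \<Longrightarrow> continuous_map (proj_limit I le X p) (X i) (\<lambda>x. x i)"
  unfolding proj_limit_def
  by (intro continuous_map_from_subtopology continuous_map_product_projection)

text \<open>A product neighbourhood constrains only finitely many coordinates, and each constraint
  is an open set, hence closed upwards in the specialization preorder.\<close>
lemma openin_product_topology_finite_spec_le: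
  assumes "openin (product_topology X I) U" "x \<in> U"
  obtains F where "finite F"
    "\<And>z. z \<in> topspace (product_topology X I) \<Longrightarrow> (\<forall>i\<in>F. spec_le (X i) (x i) (z i)) \<Longrightarrow> z \<in> U"
proof -
  obtain V where fin: "finite {i \<in> I. V i \<noteq> topspace (X i)}" and V: "\<forall>i\<in>I. openin (X i) (V i)"
    and "x \<in> Pi\<^sub>E I V" "Pi\<^sub>E I V \<subseteq> U"
    using assms unfolding openin_product_topology_alt by meson
  have "z \<in> U" if z: "z \<in> topspace (product_topology X I)"
    and above: "\<forall>i \<in> {i \<in> I. V i \<noteq> topspace (X i)}. spec_le (X i) (x i) (z i)" for z
  proof -
    have "z i \<in> V i" if "i \<in> I" for i
    proof (cases "V i = topspace (X i)")
      case True
      then show ?thesis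
        using z that by (auto simp: PiE_iff)
    next
      case False
      then show ?thesis
        using above V \<open>x \<in> Pi\<^sub>E I V\<close> that unfolding spec_le_def by (auto simp: PiE_iff)
    qed
    then have "z \<in> Pi\<^sub>E I V"
      using z by (auto simp: PiE_iff)
    then show ?thesis
      using \<open>Pi\<^sub>E I V \<subseteq> U\<close> by blast
  qed
  then show thesis
    using fin that by blast
qed

lemma openin_proj_limit_finite_spec_le:
  assumes "openin (proj_limit I le X p) U" "x \<in> U"
  obtains F where "finite F"
    "\<And>z. z \<in> topspace (proj_limit I le X p) \<Longrightarrow> (\<forall>i\<in>F. spec_le (X i) (x i) (z i)) \<Longrightarrow> z \<in> U"
proof -
  obtain U' where U': "openin (product_topology X I) U'"
    and U: "U = U' \<inter> topspace (proj_limit I le X p)"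
    using assms(1) unfolding proj_limit_def openin_subtopology topspace_subtopology by auto
  obtain F where "finite F"
    "\<And>z. z \<in> topspace (product_topology X I) \<Longrightarrow> (\<forall>i\<in>F. spec_le (X i) (x i) (z i)) \<Longrightarrow> z \<in> U'"
    using openin_product_topology_finite_spec_le[OF U'] assms(2) U by blast
  then show thesis
    using that U unfolding topspace_proj_limit by blast
qed

lemma omega_projective_nat_limit:
  fixes C' :: "(nat \<Rightarrow> 'a) topology \<Rightarrow> bool"
  assumes "omega_projective C C'" "proj_system UNIV (\<le>) X p" "\<And>n. C (X n)"
  shows "C' (proj_limit UNIV (\<le>) X p)"
proof -
  have "\<exists>D \<subseteq> UNIV. countable D \<and> (\<forall>i::nat. \<exists>d\<in>D. i \<le> d)"
    by blast
  then show ?thesis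
    using assms unfolding omega_projective_def by blast
qed

text \<open>The points of the stages are encoded as subsets of \<open>\<nat>\<close>, using the residues 0, 1 and 2
  modulo 3 for the \<open>A\<close>-chain, the \<open>B\<close>-chain and a private marker of each top, so that
  inclusion is the intended order.\<close>
definition ptA :: "nat \<Rightarrow> nat set" where "ptA i = (\<lambda>j. 3 * j) ` {..i}"
definition ptB :: "nat \<Rightarrow> nat set" where "ptB i = (\<lambda>j. 3 * j + 1) ` {..i}"
definition ptC :: "nat \<Rightarrow> nat set" where "ptC k = ptA k \<union> ptB k \<union> {3 * k + 2}"

lemma ptA_subset_ptA_iff [simp]: "ptA i \<subseteq> ptA j \<longleftrightarrow> i \<le> j"
  using subsetD[of "ptA i" "ptA j" "3 * i"] by (auto simp: ptA_def)

lemma ptB_subset_ptB_iff [simp]: "ptB i \<subseteq> ptB j \<longleftrightarrow> i \<le> j"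
  using subsetD[of "ptB i" "ptB j" "3 * i + 1"] by (auto simp: ptB_def)

lemma ptA_subset_ptC_iff [simp]: "ptA i \<subseteq> ptC k \<longleftrightarrow> i \<le> k"
  using subsetD[of "ptA i" "ptC k" "3 * i"] by (auto simp: ptC_def ptA_def ptB_def; presburger)

lemma ptB_subset_ptC_iff [simp]: "ptB i \<subseteq> ptC k \<longleftrightarrow> i \<le> k"
  using subsetD[of "ptB i" "ptC k" "3 * i + 1"] by (auto simp: ptC_def ptA_def ptB_def; presburger)

lemma ptC_subset_ptC_iff [simp]: "ptC k \<subseteq> ptC l \<longleftrightarrow> k = l"
  using subsetD[of "ptC k" "ptC l" "3 * k + 2"] by (auto simp: ptC_def ptA_def ptB_def; presburger)

lemma not_ptA_subset_ptB [simp]: "\<not> ptA i \<subseteq> ptB j"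
  using subsetD[of "ptA i" "ptB j" 0] by (auto simp: ptA_def ptB_def)

lemma not_ptB_subset_ptA [simp]: "\<not> ptB i \<subseteq> ptA j"
  using subsetD[of "ptB i" "ptA j" 1] by (auto simp: ptA_def ptB_def; presburger)

lemma not_ptC_subset_ptA [simp]: "\<not> ptC k \<subseteq> ptA j"
  using subsetD[of "ptC k" "ptA j" "3 * k + 2"] by (auto simp: ptC_def ptA_def; presburger)

lemma not_ptC_subset_ptB [simp]: "\<not> ptC k \<subseteq> ptB j"
  using subsetD[of "ptC k" "ptB j" "3 * k + 2"] by (auto simp: ptC_def ptB_def; presburger)

lemma ptA_not_in_range_ptC [simp]: "ptA i \<notin> range ptC"
  using not_ptC_subset_ptA by blast

lemma ptB_not_in_range_ptC [simp]: "ptB i \<notin> range ptC"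
  using not_ptC_subset_ptB by blast

lemma ptC_eq_iff [simp]: "ptC k = ptC l \<longleftrightarrow> k = l"
  by (metis ptC_subset_ptC_iff)

definition stage :: "nat \<Rightarrow> nat set set" where
  "stage n = ptA ` {..n} \<union> ptB ` {..n} \<union> range ptC"

definition truncate :: "nat \<Rightarrow> nat set \<Rightarrow> nat set" where
  "truncate m z = (if z \<in> range ptC then z else z \<inter> {..<3 * m + 3})"

lemma stageE:
  assumes "z \<in> stage n"
  obtains (A) i where "i \<le> n" "z = ptA i" | (B) i where "i \<le> n" "z = ptB i" | (C) k where "z = ptC k"
  using assms unfolding stage_def by blast

lemma ptA_in_stage: "i \<le> n \<Longrightarrow> ptA i \<in> stage n"
  and ptB_in_stage: "i \<le> n \<Longrightarrow> ptB i \<in> stage n"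
  and ptC_in_stage [simp]: "ptC k \<in> stage n"
  unfolding stage_def by auto

lemma stage_mono: "m \<le> n \<Longrightarrow> stage m \<subseteq> stage n"
  unfolding stage_def by auto

lemma truncate_ptA [simp]: "truncate m (ptA i) = ptA (min i m)"
  and truncate_ptB [simp]: "truncate m (ptB i) = ptB (min i m)"
  and truncate_ptC [simp]: "truncate m (ptC k) = ptC k"
proof -
  have "ptA i \<inter> {..<3 * m + 3} = ptA (min i m)" "ptB i \<inter> {..<3 * m + 3} = ptB (min i m)"
    unfolding ptA_def ptB_def by auto
  then show "truncate m (ptA i) = ptA (min i m)" "truncate m (ptB i) = ptB (min i m)"
    "truncate m (ptC k) = ptC k"
    unfolding truncate_def by simp_all
qed

lemma truncate_in_stage: "z \<in> stage n \<Longrightarrow> truncate m z \<in> stage m"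
  by (erule stageE) (simp_all add: ptA_in_stage ptB_in_stage)

lemma truncate_subset: "z \<in> stage n \<Longrightarrow> truncate m z \<subseteq> z"
  by (erule stageE) simp_all

lemma truncate_mono: "y \<in> stage n \<Longrightarrow> z \<in> stage n \<Longrightarrow> y \<subseteq> z \<Longrightarrow> truncate m y \<subseteq> truncate m z"
  by (erule stageE; erule stageE) simp_all

lemma truncate_truncate: "i \<le> j \<Longrightarrow> z \<in> stage n \<Longrightarrow> truncate i (truncate j z) = truncate i z"
  by (erule stageE) (simp_all add: min_def)

lemma truncate_stage: "z \<in> stage m \<Longrightarrow> truncate m z = z"
  by (erule stageE) (simp_all add: min_def)

lemma ptC_maximal_in_stage: "ptC k \<subseteq> z \<Longrightarrow> z \<in> stage n \<Longrightarrow> z = ptC k"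
  by (erule stageE) simp_all

lemma weakly_hausdorff_compact_sober_stage:
  "weakly_hausdorff (upper_topology (stage n)) \<and> compact_space (upper_topology (stage n))
     \<and> sober (upper_topology (stage n))"
proof (intro conjI weakly_hausdorff_upper_topology)
  show "compact_space (upper_topology (stage n))"
  proof (rule compact_space_upper_topology[of "{ptA 0, ptB 0}"])
    show "{ptA 0, ptB 0} \<subseteq> stage n"
      by (simp add: ptA_in_stage ptB_in_stage)
    show "\<exists>m\<in>{ptA 0, ptB 0}. m \<le> y" if "y \<in> stage n" for y
      using that by (cases rule: stageE) auto
  qed simp
  show "sober (upper_topology (stage n))"
  proof (rule sober_upper_topology)
    fix C assume C: "C \<subseteq> stage n" "C \<noteq> {}"
    show "\<exists>m\<in>C. \<forall>w\<in>C. m \<le> w \<longrightarrow> w = m"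
    proof (cases "\<exists>k. ptC k \<in> C")
      case True
      then show ?thesis
        using ptC_maximal_in_stage C(1) by blast
    next
      case False
      then have "C \<subseteq> ptA ` {..n} \<union> ptB ` {..n}"
        using C(1) unfolding stage_def by blast
      then have "finite C"
        by (rule finite_subset) simp
      then show ?thesis
        using finite_has_maximal[OF _ C(2)] by blast
    qed
  qed
qed

lemma ep_system_stages: "ep_system UNIV (\<le>) (\<lambda>n. upper_topology (stage n)) (\<lambda>m n. truncate m)"
  unfolding ep_system_def proj_system_def
proof (intro conjI ballI allI impI)
  fix i j :: nat assume "i \<le> j"
  show truncate_continuous: "continuous_map (upper_topology (stage j)) (upper_topology (stage i)) (truncate i)"
    by (rule continuous_map_upper_topology) (auto simp: truncate_in_stage truncate_mono)
  show "is_projection (upper_topology (stage j)) (upper_topology (stage i)) (truncate i)"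
    unfolding is_projection_def
  proof (intro conjI truncate_continuous exI[of _ id] ballI)
    show "continuous_map (upper_topology (stage i)) (upper_topology (stage j)) id"
      by (rule continuous_map_upper_topology) (use stage_mono[OF \<open>i \<le> j\<close>] in auto)
    show "truncate i (id x) = x" if "x \<in> topspace (upper_topology (stage i))" for x
      using that by (simp add: truncate_stage)
    show "spec_le (upper_topology (stage j)) (id (truncate i y)) y"
      if "y \<in> topspace (upper_topology (stage j))" for y
      using that stage_mono[OF \<open>i \<le> j\<close>]
      by (auto simp: spec_le_upper_topology truncate_in_stage truncate_subset)
  qed
qed (auto simp: truncate_stage truncate_truncate, metis nat_le_linear)

definition stage_limit :: "(nat \<Rightarrow> nat set) topology" where
  "stage_limit = proj_limit UNIV (\<le>) (\<lambda>n. upper_topology (stage n)) (\<lambda>m n. truncate m)"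

lemma topspace_stage_limit:
  "z \<in> topspace stage_limit \<longleftrightarrow> (\<forall>n. z n \<in> stage n) \<and> (\<forall>i j. i \<le> j \<longrightarrow> truncate i (z j) = z i)"
  unfolding stage_limit_def topspace_proj_limit by (auto simp: PiE_iff)

lemma disjoint_upsets_ptA_ptB:
  "upset stage_limit ptA \<inter> upset stage_limit ptB = {}"
proof (rule ccontr)
  assume "upset stage_limit ptA \<inter> upset stage_limit ptB \<noteq> {}"
  then obtain z where z: "z \<in> topspace stage_limit"
    and "spec_le stage_limit ptA z" "spec_le stage_limit ptB z"
    unfolding upset_def by auto
  then have "spec_le (upper_topology (stage n)) (ptA n) (z n)"
    "spec_le (upper_topology (stage n)) (ptB n) (z n)" for n
    using spec_le_continuous_map[OF continuous_map_proj_limit_component[of n UNIV]]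
    unfolding stage_limit_def by blast+
  then have above: "ptA n \<subseteq> z n" "ptB n \<subseteq> z n" and in_stage: "z n \<in> stage n" for n
    by (simp_all add: spec_le_upper_topology)
  have top: "\<exists>k\<ge>n. z n = ptC k" for n
    using above[of n] by (cases rule: stageE[OF in_stage[of n]]) auto
  obtain k where "z 0 = ptC k"
    using top by blast
  moreover obtain l where "l \<ge> Suc k" "z (Suc k) = ptC l"
    using top by blast
  moreover have "truncate 0 (z (Suc k)) = z 0"
    using z by (simp add: topspace_stage_limit)
  ultimately show False
    by simp
qed

lemma not_weakly_hausdorff_stage_limit: "\<not> weakly_hausdorff stage_limit"
proof
  assume "weakly_hausdorff stage_limit"
  moreover have "ptA \<in> topspace stage_limit" "ptB \<in> topspace stage_limit"
    by (auto simp: topspace_stage_limit ptA_in_stage ptB_in_stage min_def)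
  ultimately obtain U V where "openin stage_limit U" "openin stage_limit V" "ptA \<in> U" "ptB \<in> V"
    and disjoint: "U \<inter> V = {}"
    by (rule weakly_hausdorff_disjoint_upsetsE[OF _ _ _ disjoint_upsets_ptA_ptB])
  note open_nhd = openin_proj_limit_finite_spec_le[of UNIV "(\<le>)" "\<lambda>n. upper_topology (stage n)"
      "\<lambda>m n. truncate m", folded stage_limit_def]
  obtain F where "finite F" and F: "\<And>z. z \<in> topspace stage_limit \<Longrightarrow>
      (\<forall>i\<in>F. spec_le (upper_topology (stage i)) (ptA i) (z i)) \<Longrightarrow> z \<in> U"
    using open_nhd[OF \<open>openin stage_limit U\<close> \<open>ptA \<in> U\<close>] by blast
  obtain G where "finite G" and G: "\<And>z. z \<in> topspace stage_limit \<Longrightarrow>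
      (\<forall>i\<in>G. spec_le (upper_topology (stage i)) (ptB i) (z i)) \<Longrightarrow> z \<in> V"
    using open_nhd[OF \<open>openin stage_limit V\<close> \<open>ptB \<in> V\<close>] by blast
  have "finite (F \<union> G)"
    using \<open>finite F\<close> \<open>finite G\<close> by simp
  then obtain N where N: "\<forall>i \<in> F \<union> G. i \<le> N"
    unfolding finite_nat_set_iff_bounded_le by blast
  have top_thread: "(\<lambda>_. ptC N) \<in> topspace stage_limit"
    by (simp add: topspace_stage_limit)
  have "(\<lambda>_. ptC N) \<in> U"
    using N by (intro F[OF top_thread]) (auto simp: spec_le_upper_topology ptA_in_stage)
  moreover have "(\<lambda>_. ptC N) \<in> V"
    using N by (intro G[OF top_thread]) (auto simp: spec_le_upper_topology ptB_in_stage)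
  ultimately show False
    using disjoint by blast
qed

theorem corollary5p5:
  shows "\<not> omega_projective (weakly_hausdorff :: nat set topology \<Rightarrow> bool)
            (weakly_hausdorff :: (nat \<Rightarrow> nat set) topology \<Rightarrow> bool)
       \<and> \<not> omega_projective (\<lambda>X::nat set topology. weakly_hausdorff X \<and> compact_space X)
            (\<lambda>X::(nat \<Rightarrow> nat set) topology. weakly_hausdorff X \<and> compact_space X)
       \<and> \<not> omega_projective (\<lambda>X::nat set topology. weakly_hausdorff X \<and> sober X)
            (\<lambda>X::(nat \<Rightarrow> nat set) topology. weakly_hausdorff X \<and> sober X)
       \<and> \<not> omega_projective (\<lambda>X::nat set topology. weakly_hausdorff X \<and> compact_space X \<and> sober X)
            (\<lambda>X::(nat \<Rightarrow> nat set) topology. weakly_hausdorff X \<and> compact_space X \<and> sober X)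
       \<and> (\<exists>(X :: nat \<Rightarrow> nat set topology) p.
            ep_system UNIV (\<le>) X p \<and>
            (\<forall>n. weakly_hausdorff (X n) \<and> compact_space (X n) \<and> sober (X n)) \<and>
            \<not> weakly_hausdorff (proj_limit UNIV (\<le>) X p))"
proof -
  have counterexample: "\<not> omega_projective C (C' :: (nat \<Rightarrow> nat set) topology \<Rightarrow> bool)"
    if "\<And>n. C (upper_topology (stage n))" "\<And>Y. C' Y \<Longrightarrow> weakly_hausdorff Y" for C C'
  proof
    assume "omega_projective C C'"
    then have "C' stage_limit"
      unfolding stage_limit_def
      by (rule omega_projective_nat_limit) (use ep_system_stages that(1) in \<open>auto simp: ep_system_def\<close>)
    then show False
      using that(2) not_weakly_hausdorff_stage_limit by blast
  qed
  have limit: "\<exists>(X :: nat \<Rightarrow> nat set topology) p. ep_system UNIV (\<le>) X p \<and>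
      (\<forall>n. weakly_hausdorff (X n) \<and> compact_space (X n) \<and> sober (X n)) \<and>
      \<not> weakly_hausdorff (proj_limit UNIV (\<le>) X p)"
    using ep_system_stages weakly_hausdorff_compact_sober_stage not_weakly_hausdorff_stage_limit
    unfolding stage_limit_def by blast
  show ?thesis
    by (intro conjI counterexample limit) (simp_all add: weakly_hausdorff_compact_sober_stage)
qed

end
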